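(* For every reduction $S$ in a TRS the following equivalences hold: (i) $S$ starting in $s$ is weakly $p$-continuous and total iff $S$ starting in $s$ is weakly $m$-continuous; and (ii) $S$ weakly $p$-converges from $s$ to $t$ and is total iff $S$ weakly $m$-converges from $s$ to $t$.
   Context: A TRS $\mathcal{R}=(\Sigma,R)$ has rules $l\to r$ over possibly infinite terms. Total terms are the (possibly infinite) terms over $\Sigma$ and variables; partial terms are terms over $\Sigma_\bot=\Sigma\uplus\{\bot\}$. The order $s\le_\bot t$ holds iff $s$ is obtained from $t$ by replacing some subterm occurrences by $\bot$; partial terms with $\le_\bot$ form a complete semilattice. For a non-empty sequence $(a_\iota)_{\iota<\alpha}$ its limit inferior is $\liminf_{\iota\to\alpha}a_\iota=\bigvee_{\beta<\alpha}\bigwedge_{\beta\le\iota<\alpha}a_\iota$ (least upper bound over $\beta$ of greatest lower bounds of the tails). On total terms, $d(s,t)=2^{-k}$ with $k$ the minimal depth at which $s,t$ differ ($d(s,s)=0$); this is a complete ultrametric. A reduction is a transfinite sequence of steps $S=(t_\iota\to_{\pi_\iota}t_{\iota+1})_{\iota<\alpha}$ (for partial terms, in $(\Sigma_\bot,R)$). $S$ is weakly $p$-continuous if $\liminf_{\iota\to\lambda}t_\iota=t_\lambda$ for every limit $\lambda<\alpha$, and weakly $p$-converges to $t$ if it is weakly $p$-continuous and $t=\liminf_{\iota\to\hat\alpha}t_\iota$ (with $\hat\alpha=\alpha+1$ if $S$ is closed, $\alpha$ if open, so for closed $S$, $t$ is its last term). Weak $m$-continuity/convergence are defined identically with the metric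 limit $\lim$ in place of $\liminf$ (and total terms). "Total" means all terms of $S$ (and the final term $t$) are total. *)

theory Defs
  imports Complex_Main "HOL-Library.Sublist"
begin

text \<open>Node labels: function symbols of the signature, variables, and the extra
  constant bot (only occurring in partial terms).\<close>
datatype ('f, 'v) sym = Fun 'f | Var 'v | Bot

text \<open>A (possibly infinite) term is a map from positions (lists of argument
  indices) to labels; None means the position does not belong to the term.\<close>
type_synonym ('f, 'v) trm = "nat list \<Rightarrow> ('f, 'v) sym option"

text \<open>The signature is given by an arity function ar.  A partial term is a
  well-formed tree over Sigma extended by bot (bot, variables: arity 0).\<close>
definition is_pterm :: "('f \<Rightarrow> nat) \<Rightarrow> ('f, 'v) trm \<Rightarrow> bool" where
  "is_pterm ar t \<longleftrightarrow> t [] \<noteq> None \<and>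
     (\<forall>p i. t (p @ [i]) \<noteq> None \<longleftrightarrow> (\<exists>f. t p = Some (Fun f) \<and> i < ar f))"

definition is_total :: "('f \<Rightarrow> nat) \<Rightarrow> ('f, 'v) trm \<Rightarrow> bool" where
  "is_total ar t \<longleftrightarrow> is_pterm ar t \<and> (\<forall>p. t p \<noteq> Some Bot)"

definition poss :: "('f, 'v) trm \<Rightarrow> nat list set" where
  "poss t = {p. t p \<noteq> None}"

definition vars :: "('f, 'v) trm \<Rightarrow> 'v set" where
  "vars t = {x. \<exists>p. t p = Some (Var x)}"

definition subterm_at :: "('f, 'v) trm \<Rightarrow> nat list \<Rightarrow> ('f, 'v) trm" where
  "subterm_at t \<pi> = (\<lambda>p. t (\<pi> @ p))"

definition replace_at :: "('f, 'v) trm \<Rightarrow> nat list \<Rightarrow> ('f, 'v) trm \<Rightarrow> ('f, 'v) trm" where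
  "replace_at t \<pi> s = (\<lambda>p. if prefix \<pi> p then s (drop (length \<pi>) p) else t p)"

definition subst_apply :: "('v \<Rightarrow> ('f, 'v) trm) \<Rightarrow> ('f, 'v) trm \<Rightarrow> ('f, 'v) trm" where
  "subst_apply \<sigma> l = (\<lambda>p.
     if \<exists>q x. prefix q p \<and> l q = Some (Var x)
     then (case SOME qx. prefix (fst qx) p \<and> l (fst qx) = Some (Var (snd qx)) of
             (q, x) \<Rightarrow> \<sigma> x (drop (length q) p))
     else l p)"

definition is_TRS :: "('f \<Rightarrow> nat) \<Rightarrow> (('f, 'v) trm \<times> ('f, 'v) trm) set \<Rightarrow> bool" where
  "is_TRS ar R \<longleftrightarrow> (\<forall>(l, r) \<in> R. is_total ar l \<and> is_total ar r \<and>
      (\<forall>x. l [] \<noteq> Some (Var x)) \<and> vars r \<subseteq> vars l)"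

text \<open>A rewrite step t ->_pi u using a rule of R, where all terms (and the
  substitution) range over the term class T (partial or total terms).\<close>
definition rstep :: "(('f, 'v) trm \<Rightarrow> bool) \<Rightarrow> (('f, 'v) trm \<times> ('f, 'v) trm) set \<Rightarrow>
    ('f, 'v) trm \<Rightarrow> nat list \<Rightarrow> ('f, 'v) trm \<Rightarrow> bool" where
  "rstep T R t \<pi> u \<longleftrightarrow> T t \<and> T u \<and> \<pi> \<in> poss t \<and>
     (\<exists>(l, r) \<in> R. \<exists>\<sigma>. (\<forall>x. T (\<sigma> x)) \<and>
        subterm_at t \<pi> = subst_apply \<sigma> l \<and> u = replace_at t \<pi> (subst_apply \<sigma> r))"

text \<open>Ordinals are represented by elements of an arbitrary well-ordered type;
  the initial segment below alpha is order-isomorphic to the ordinal alpha.\<close>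
definition ozero :: "'o::wellorder" where
  "ozero = (LEAST i. True)"

definition osuc :: "'o::wellorder \<Rightarrow> 'o" where
  "osuc i = (LEAST k. i < k)"

definition is_limit :: "'o::wellorder \<Rightarrow> bool" where
  "is_limit lam \<longleftrightarrow> (\<exists>i. i < lam) \<and> (\<forall>i<lam. \<exists>k. i < k \<and> k < lam)"

text \<open>Index set of the terms of a reduction of length alpha, i.e. the indices
  below alpha-hat: alpha-hat = alpha + 1 if S is closed (alpha not a limit
  ordinal), alpha-hat = alpha if S is open (alpha a limit ordinal).\<close>
definition idx :: "'o::wellorder \<Rightarrow> 'o set" where
  "idx \<alpha> = (if is_limit \<alpha> then {i. i < \<alpha>} else {i. i \<le> \<alpha>})"

text \<open>A reduction S = (t_i ->_{pi_i} t_{i+1})_{i<alpha}, given by its length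
  alpha, its terms ts (indices in idx alpha) and its step positions ps.\<close>
definition is_reduction :: "(('f, 'v) trm \<Rightarrow> bool) \<Rightarrow> (('f, 'v) trm \<times> ('f, 'v) trm) set \<Rightarrow>
    'o::wellorder \<Rightarrow> ('o \<Rightarrow> ('f, 'v) trm) \<Rightarrow> ('o \<Rightarrow> nat list) \<Rightarrow> bool" where
  "is_reduction T R \<alpha> ts ps \<longleftrightarrow> (\<forall>i \<in> idx \<alpha>. T (ts i)) \<and>
     (\<forall>i<\<alpha>. rstep T R (ts i) (ps i) (ts (osuc i)))"

definition replace_bot :: "('f, 'v) trm \<Rightarrow> nat list set \<Rightarrow> ('f, 'v) trm" where
  "replace_bot t P = (\<lambda>p. if \<exists>q\<in>P. strict_prefix q p then None
                          else if p \<in> P then Some Bot else t p)"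

definition le_bot :: "('f, 'v) trm \<Rightarrow> ('f, 'v) trm \<Rightarrow> bool" where
  "le_bot s t \<longleftrightarrow> (\<exists>P \<subseteq> poss t. s = replace_bot t P)"

definition is_glb :: "('f \<Rightarrow> nat) \<Rightarrow> ('f, 'v) trm set \<Rightarrow> ('f, 'v) trm \<Rightarrow> bool" where
  "is_glb ar A g \<longleftrightarrow> is_pterm ar g \<and> (\<forall>a\<in>A. le_bot g a) \<and>
     (\<forall>h. is_pterm ar h \<and> (\<forall>a\<in>A. le_bot h a) \<longrightarrow> le_bot h g)"

definition is_lub :: "('f \<Rightarrow> nat) \<Rightarrow> ('f, 'v) trm set \<Rightarrow> ('f, 'v) trm \<Rightarrow> bool" where
  "is_lub ar A g \<longleftrightarrow> is_pterm ar g \<and> (\<forall>a\<in>A. le_bot a g) \<and>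
     (\<forall>h. is_pterm ar h \<and> (\<forall>a\<in>A. le_bot a h) \<longrightarrow> le_bot g h)"

definition glb :: "('f \<Rightarrow> nat) \<Rightarrow> ('f, 'v) trm set \<Rightarrow> ('f, 'v) trm" where
  "glb ar A = (THE g. is_glb ar A g)"

definition lub :: "('f \<Rightarrow> nat) \<Rightarrow> ('f, 'v) trm set \<Rightarrow> ('f, 'v) trm" where
  "lub ar A = (THE g. is_lub ar A g)"

definition pliminf :: "('f \<Rightarrow> nat) \<Rightarrow> 'o::wellorder set \<Rightarrow> ('o \<Rightarrow> ('f, 'v) trm) \<Rightarrow> ('f, 'v) trm" where
  "pliminf ar I a = lub ar {glb ar (a ` {i \<in> I. b \<le> i}) | b. b \<in> I}"

definition weakly_p_continuous :: "('f \<Rightarrow> nat) \<Rightarrow> (('f, 'v) trm \<times> ('f, 'v) trm) set \<Rightarrow>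
    'o::wellorder \<Rightarrow> ('o \<Rightarrow> ('f, 'v) trm) \<Rightarrow> ('o \<Rightarrow> nat list) \<Rightarrow> bool" where
  "weakly_p_continuous ar R \<alpha> ts ps \<longleftrightarrow> is_reduction (is_pterm ar) R \<alpha> ts ps \<and>
     (\<forall>lam<\<alpha>. is_limit lam \<longrightarrow> pliminf ar {i. i < lam} ts = ts lam)"

definition weakly_p_converges :: "('f \<Rightarrow> nat) \<Rightarrow> (('f, 'v) trm \<times> ('f, 'v) trm) set \<Rightarrow>
    'o::wellorder \<Rightarrow> ('o \<Rightarrow> ('f, 'v) trm) \<Rightarrow> ('o \<Rightarrow> nat list) \<Rightarrow> ('f, 'v) trm \<Rightarrow> bool" where
  "weakly_p_converges ar R \<alpha> ts ps t \<longleftrightarrow> weakly_p_continuous ar R \<alpha> ts ps \<and>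
     t = pliminf ar (idx \<alpha>) ts"

definition total_red :: "('f \<Rightarrow> nat) \<Rightarrow> 'o::wellorder \<Rightarrow> ('o \<Rightarrow> ('f, 'v) trm) \<Rightarrow> bool" where
  "total_red ar \<alpha> ts \<longleftrightarrow> (\<forall>i \<in> idx \<alpha>. is_total ar (ts i))"

definition tdist :: "('f, 'v) trm \<Rightarrow> ('f, 'v) trm \<Rightarrow> real" where
  "tdist s t = (if s = t then 0
                else inverse (2 ^ (LEAST k. \<exists>p. length p = k \<and> s p \<noteq> t p)))"

definition mlim :: "'o::wellorder set \<Rightarrow> ('o \<Rightarrow> ('f, 'v) trm) \<Rightarrow> ('f, 'v) trm \<Rightarrow> bool" where
  "mlim I a t \<longleftrightarrow> (\<forall>\<epsilon>>0. \<exists>b\<in>I. \<forall>i\<in>I. b \<le> i \<longrightarrow> tdist (a i) t < \<epsilon>)"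

definition weakly_m_continuous :: "('f \<Rightarrow> nat) \<Rightarrow> (('f, 'v) trm \<times> ('f, 'v) trm) set \<Rightarrow>
    'o::wellorder \<Rightarrow> ('o \<Rightarrow> ('f, 'v) trm) \<Rightarrow> ('o \<Rightarrow> nat list) \<Rightarrow> bool" where
  "weakly_m_continuous ar R \<alpha> ts ps \<longleftrightarrow> is_reduction (is_total ar) R \<alpha> ts ps \<and>
     (\<forall>lam<\<alpha>. is_limit lam \<longrightarrow> mlim {i. i < lam} ts (ts lam))"

definition weakly_m_converges :: "('f \<Rightarrow> nat) \<Rightarrow> (('f, 'v) trm \<times> ('f, 'v) trm) set \<Rightarrow>
    'o::wellorder \<Rightarrow> ('o \<Rightarrow> ('f, 'v) trm) \<Rightarrow> ('o \<Rightarrow> nat list) \<Rightarrow> ('f, 'v) trm \<Rightarrow> bool" where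
  "weakly_m_converges ar R \<alpha> ts ps t \<longleftrightarrow> weakly_m_continuous ar R \<alpha> ts ps \<and>
     is_total ar t \<and> mlim (idx \<alpha>) ts t"

end

theory Submission
  imports Defs
begin

text \<open>Both notions of continuity and convergence compare a sequence with a candidate limit at
  limit ordinals, so everything rests on one fact: for total terms \<open>a\<^sub>i\<close> and a total \<open>t\<close>,
  \<open>liminf a\<^sub>i = t\<close> iff \<open>a\<^sub>i \<rightarrow> t\<close> in the metric. The limit inferior is the least upper bound of
  the chain of greatest lower bounds of the tails, and both sides turn out to mean that for
  every depth \<open>d\<close> the terms eventually agree with \<open>t\<close> up to depth \<open>d\<close>. It remains that a step
  of the partial system between total terms is a step of the total system.\<close>

section \<open>Partial terms and the order \<open>le_bot\<close>\<close>

lemma is_pterm_root: "is_pterm ar t \<Longrightarrow> t [] \<noteq> None"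
  by (simp add: is_pterm_def)

lemma is_pterm_snoc:
  "is_pterm ar t \<Longrightarrow> t (p @ [i]) \<noteq> None \<longleftrightarrow> (\<exists>f. t p = Some (Fun f) \<and> i < ar f)"
  by (simp add: is_pterm_def)

lemma strict_prefix_snoc_iff: "strict_prefix q (p @ [i]) \<longleftrightarrow> prefix q p"
  by (metis prefix_order.less_le prefix_snoc prefix_snocD)

lemma is_pterm_strict_prefix:
  assumes t: "is_pterm ar t" and "t p \<noteq> None" "strict_prefix q p"
  shows "\<exists>f. t q = Some (Fun f)"
  using assms(2,3)
proof (induction p rule: rev_induct)
  case Nil
  then show ?case by simp
next
  case (snoc i p)
  then obtain f where f: "t p = Some (Fun f)" using is_pterm_snoc[OF t] by blast
  have "q = p \<or> strict_prefix q p"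
    using snoc.prems(2) by (auto simp: strict_prefix_snoc_iff prefix_order.le_less)
  then show ?case using f snoc.IH by auto
qed

lemma is_total_pterm: "is_total ar t \<Longrightarrow> is_pterm ar t"
  by (simp add: is_total_def)

lemma is_total_not_Bot: "is_total ar t \<Longrightarrow> t p \<noteq> Some Bot"
  by (simp add: is_total_def)

lemma le_bot_eq:
  assumes "le_bot s t" "s p \<noteq> None" "s p \<noteq> Some Bot"
  shows "t p = s p"
  using assms unfolding le_bot_def replace_bot_def by (auto split: if_splits)

lemma le_bot_Bot:
  assumes "le_bot s t" "s p = Some Bot"
  shows "t p \<noteq> None"
  using assms unfolding le_bot_def replace_bot_def poss_def by (auto split: if_splits)

lemma le_botI:
  assumes s: "is_pterm ar s" and t: "is_pterm ar t"
    and eq: "\<And>p. s p \<noteq> None \<Longrightarrow> s p \<noteq> Some Bot \<Longrightarrow> t p = s p"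
    and Bot: "\<And>p. s p = Some Bot \<Longrightarrow> t p \<noteq> None"
  shows "le_bot s t"
proof -
  define P where "P = {p. s p = Some Bot}"
  have below_P: "s p = None" if "q \<in> P" "strict_prefix q p" for p q
    using is_pterm_strict_prefix[OF s, of p q] that unfolding P_def by (cases "s p") auto
  have off_P: "s p = t p" if "\<forall>q. strict_prefix q p \<longrightarrow> q \<notin> P" "p \<notin> P" for p
    using that
  proof (induction p rule: rev_induct)
    case Nil
    then show ?case using eq[of "[]"] is_pterm_root[OF s] unfolding P_def by auto
  next
    case (snoc i p)
    show ?case
    proof (cases "s (p @ [i]) = None")
      case True
      have "strict_prefix q (p @ [i])" if "q = p \<or> strict_prefix q p" for q
        using that by (auto simp: strict_prefix_snoc_iff)
      then have "\<forall>q. strict_prefix q p \<longrightarrow> q \<notin> P" "p \<notin> P"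
        using snoc.prems(1) by blast+
      then have "s p = t p" by (rule snoc.IH)
      then show ?thesis using True is_pterm_snoc[OF s, of p i] is_pterm_snoc[OF t, of p i] by auto
    next
      case False
      then show ?thesis using eq[of "p @ [i]"] snoc.prems(2) unfolding P_def by auto
    qed
  qed
  have "s = replace_bot t P"
  proof
    fix p
    show "s p = replace_bot t P p"
    proof (cases "\<exists>q\<in>P. strict_prefix q p")
      case True
      then show ?thesis using below_P unfolding replace_bot_def by auto
    next
      case False
      then show ?thesis using off_P[of p] unfolding replace_bot_def P_def by auto
    qed
  qed
  moreover have "P \<subseteq> poss t" using Bot unfolding P_def poss_def by auto
  ultimately show ?thesis unfolding le_bot_def by (intro exI[of _ P] conjI)
qed

lemma le_bot_not_None: "le_bot s t \<Longrightarrow> s p \<noteq> None \<Longrightarrow> t p \<noteq> None"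
  using le_bot_eq le_bot_Bot by (metis option.distinct(1))

lemma le_bot_antisym:
  assumes st: "le_bot s t" and ts: "le_bot t s" shows "s = t"
proof
  fix p
  consider "s p = None" | "s p = Some Bot" | "s p \<noteq> None" "s p \<noteq> Some Bot" by blast
  then show "s p = t p"
  proof cases
    case 1
    then show ?thesis using le_bot_not_None[OF ts, of p] by (cases "t p") auto
  next
    case 2
    then show ?thesis using le_bot_eq[OF ts, of p] le_bot_Bot[OF st, of p] by (cases "t p = Some Bot") auto
  next
    case 3
    then show ?thesis using le_bot_eq[OF st] by simp
  qed
qed

lemma glb_eqI: "is_glb ar A g \<Longrightarrow> glb ar A = g"
  unfolding glb_def by (rule the_equality) (auto simp: is_glb_def intro: le_bot_antisym)

lemma lub_eqI: "is_lub ar A g \<Longrightarrow> lub ar A = g"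
  unfolding lub_def by (rule the_equality) (auto simp: is_lub_def intro: le_bot_antisym)

section \<open>Greatest lower bounds\<close>

definition agree_at :: "('f, 'v) trm set \<Rightarrow> nat list \<Rightarrow> bool" where
  "agree_at A p \<longleftrightarrow> (\<forall>a\<in>A. \<forall>b\<in>A. a p = b p)"

definition common_part :: "('f, 'v) trm set \<Rightarrow> ('f, 'v) trm" where
  "common_part A = (\<lambda>p. if \<forall>q. strict_prefix q p \<longrightarrow> agree_at A q
      then (if agree_at A p then (SOME a. a \<in> A) p else Some Bot) else None)"

context
  fixes ar :: "'f \<Rightarrow> nat" and A :: "('f, 'v) trm set"
  assumes nonempty: "A \<noteq> {}" and pterm: "\<And>a. a \<in> A \<Longrightarrow> is_pterm ar a"
begin

private definition a0 :: "('f, 'v) trm" where "a0 = (SOME a. a \<in> A)"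

private lemma a0_in: "a0 \<in> A"
  using nonempty unfolding a0_def by (simp add: some_in_eq)

private lemma agree_at_a0: "agree_at A p \<Longrightarrow> a \<in> A \<Longrightarrow> a p = a0 p"
  using a0_in unfolding agree_at_def by blast

private lemma common_part_agree:
  "(\<And>q. prefix q p \<Longrightarrow> agree_at A q) \<Longrightarrow> common_part A p = a0 p"
  unfolding common_part_def a0_def[symmetric] by (simp add: prefix_order.less_imp_le)

private lemma common_part_cases:
  obtains (agree) "\<And>q. prefix q p \<Longrightarrow> agree_at A q" "common_part A p = a0 p"
    | (disagree) "\<And>q. strict_prefix q p \<Longrightarrow> agree_at A q" "\<not> agree_at A p"
        "common_part A p = Some Bot"
    | (outside) q where "strict_prefix q p" "\<not> agree_at A q" "common_part A p = None"
proof (cases "\<forall>q. strict_prefix q p \<longrightarrow> agree_at A q")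
  case strict: True
  show ?thesis
  proof (cases "agree_at A p")
    case True
    then have "\<And>q. prefix q p \<Longrightarrow> agree_at A q" using strict by (auto simp: prefix_order.le_less)
    then show ?thesis using agree common_part_agree by blast
  next
    case False
    then show ?thesis using disagree strict unfolding common_part_def by simp
  qed
next
  case False
  then obtain q where "strict_prefix q p" "\<not> agree_at A q" by blast
  moreover have "common_part A p = None" unfolding common_part_def by (simp only: if_not_P[OF False])
  ultimately show ?thesis by (rule outside)
qed

private lemma disagree_snoc_imp_Fun:
  assumes "\<not> agree_at A (p @ [i])" "agree_at A p" "a \<in> A"
  shows "\<exists>f. a p = Some (Fun f) \<and> i < ar f"
proof -
  obtain d where d: "d \<in> A" "d (p @ [i]) \<noteq> None"
    using assms(1) unfolding agree_at_def by (metis option.simps(3) not_None_eq)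
  then have "\<exists>f. d p = Some (Fun f) \<and> i < ar f" using is_pterm_snoc[OF pterm[OF d(1)]] by blast
  moreover have "a p = d p" using agree_at_a0[OF assms(2) assms(3)] agree_at_a0[OF assms(2) d(1)] by simp
  ultimately show ?thesis by simp
qed

lemma is_pterm_common_part: "is_pterm ar (common_part A)"
  unfolding is_pterm_def
proof (intro conjI allI)
  show "common_part A [] \<noteq> None"
    by (cases rule: common_part_cases[of "[]"]) (use is_pterm_root[OF pterm[OF a0_in]] in auto)
next
  fix p i
  show "common_part A (p @ [i]) \<noteq> None \<longleftrightarrow> (\<exists>f. common_part A p = Some (Fun f) \<and> i < ar f)"
  proof (cases rule: common_part_cases[of p])
    case agree
    show ?thesis
    proof (cases rule: common_part_cases[of "p @ [i]"])
      case agree': agree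
      then show ?thesis using agree is_pterm_snoc[OF pterm[OF a0_in]] by simp
    next
      case disagree
      then show ?thesis using agree disagree_snoc_imp_Fun[OF _ _ a0_in] by simp
    next
      case (outside q)
      then show ?thesis using agree(1) by (simp add: strict_prefix_snoc_iff)
    qed
  next
    case disagree
    then have "common_part A (p @ [i]) = None"
      by (cases rule: common_part_cases[of "p @ [i]"]) (auto simp: strict_prefix_snoc_iff)
    then show ?thesis using disagree by simp
  next
    case (outside q)
    then have "common_part A (p @ [i]) = None"
      by (cases rule: common_part_cases[of "p @ [i]"])
        (auto simp: strict_prefix_snoc_iff dest: prefix_order.less_imp_le)
    then show ?thesis using outside by simp
  qed
qed

lemma common_part_le_bot:
  assumes a: "a \<in> A" shows "le_bot (common_part A) a"
proof (rule le_botI[OF is_pterm_common_part pterm[OF a]])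
  fix p
  assume "common_part A p \<noteq> None" "common_part A p \<noteq> Some Bot"
  then show "a p = common_part A p"
    by (cases rule: common_part_cases[of p]) (use agree_at_a0[OF _ a] in auto)
next
  fix p
  assume Bot: "common_part A p = Some Bot"
  show "a p \<noteq> None"
  proof (cases rule: common_part_cases[of p])
    case agree
    then have "agree_at A p" by simp
    then show ?thesis using Bot agree agree_at_a0[OF _ a] by simp
  next
    case disagree
    show ?thesis
    proof (cases p rule: rev_cases)
      case Nil
      then show ?thesis using is_pterm_root[OF pterm[OF a]] by simp
    next
      case (snoc p' i)
      then have "agree_at A p'" using disagree(1) by (simp add: strict_prefix_snoc_iff)
      then show ?thesis
        using disagree_snoc_imp_Fun[OF _ _ a] disagree(2) is_pterm_snoc[OF pterm[OF a]] snoc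
        by blast
    qed
  next
    case outside
    then show ?thesis using Bot by simp
  qed
qed

lemma le_bot_common_part:
  assumes h: "is_pterm ar h" and below: "\<And>a. a \<in> A \<Longrightarrow> le_bot h a"
  shows "le_bot h (common_part A)"
proof -
  have agree: "agree_at A p" "a0 p = h p" if "h p \<noteq> None" "h p \<noteq> Some Bot" for p
  proof -
    have all: "a p = h p" if "a \<in> A" for a
      using le_bot_eq[OF below[OF that]] \<open>h p \<noteq> None\<close> \<open>h p \<noteq> Some Bot\<close> .
    then show "agree_at A p" unfolding agree_at_def by metis
    show "a0 p = h p" using all a0_in by blast
  qed
  have prefixes: "agree_at A q" if hp: "h p \<noteq> None" and qp: "strict_prefix q p" for p q
  proof -
    obtain f where "h q = Some (Fun f)" using is_pterm_strict_prefix[OF h hp qp] by blast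
    then show ?thesis using agree(1)[of q] by simp
  qed
  show ?thesis
  proof (rule le_botI[OF h is_pterm_common_part])
    fix p
    assume "h p \<noteq> None" "h p \<noteq> Some Bot"
    then show "common_part A p = h p"
      by (cases rule: common_part_cases[of p]) (use agree prefixes in auto)
  next
    fix p
    assume "h p = Some Bot"
    moreover have "a0 p \<noteq> None" using le_bot_Bot[OF below[OF a0_in]] calculation .
    ultimately show "common_part A p \<noteq> None"
      by (cases rule: common_part_cases[of p]) (use prefixes in auto)
  qed
qed

lemma is_glb_common_part: "is_glb ar A (common_part A)"
  unfolding is_glb_def
  using is_pterm_common_part common_part_le_bot le_bot_common_part by blast

end

section \<open>Least upper bounds of chains\<close>

definition chain_sup :: "('f, 'v) trm set \<Rightarrow> ('f, 'v) trm" where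
  "chain_sup C = (\<lambda>p. if \<exists>c\<in>C. c p \<noteq> None \<and> c p \<noteq> Some Bot
      then (SOME c. c \<in> C \<and> c p \<noteq> None \<and> c p \<noteq> Some Bot) p
      else if \<exists>c\<in>C. c p = Some Bot then Some Bot else None)"

lemma chain_sup_eq:
  assumes ch: "Complete_Partial_Order.chain le_bot C"
    and c: "c \<in> C" "c p \<noteq> None" "c p \<noteq> Some Bot"
  shows "chain_sup C p = c p"
proof -
  define d where "d = (SOME c. c \<in> C \<and> c p \<noteq> None \<and> c p \<noteq> Some Bot)"
  have d: "d \<in> C" "d p \<noteq> None" "d p \<noteq> Some Bot"
    using someI[of "\<lambda>c. c \<in> C \<and> c p \<noteq> None \<and> c p \<noteq> Some Bot"] c unfolding d_def by blast+
  have "d p = c p"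
  proof (cases "le_bot c d")
    case True
    then show ?thesis using le_bot_eq c(2,3) by blast
  next
    case False
    then have "le_bot d c" using ch c(1) d(1) unfolding chain_def by blast
    then show ?thesis using le_bot_eq d(2,3) by metis
  qed
  moreover have "\<exists>c\<in>C. c p \<noteq> None \<and> c p \<noteq> Some Bot" using c by blast
  then have "chain_sup C p = d p" unfolding chain_sup_def d_def by (simp only: if_P)
  ultimately show ?thesis by simp
qed

lemma chain_sup_cases:
  assumes ch: "Complete_Partial_Order.chain le_bot C"
  obtains (sym) c where "c \<in> C" "c p \<noteq> None" "c p \<noteq> Some Bot" "chain_sup C p = c p"
    | (bot) c where "c \<in> C" "c p = Some Bot" "chain_sup C p = Some Bot"
    | (none) "\<forall>c\<in>C. c p = None" "chain_sup C p = None"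
proof (cases "\<exists>c\<in>C. c p \<noteq> None \<and> c p \<noteq> Some Bot")
  case True
  then show ?thesis using sym chain_sup_eq[OF ch] by blast
next
  case False
  then have "chain_sup C p = (if \<exists>c\<in>C. c p = Some Bot then Some Bot else None)"
    unfolding chain_sup_def by (simp only: if_not_P if_False)
  then show ?thesis using bot none False by (cases "\<exists>c\<in>C. c p = Some Bot") auto
qed

lemma chain_sup_not_None_iff:
  assumes "Complete_Partial_Order.chain le_bot C"
  shows "chain_sup C p \<noteq> None \<longleftrightarrow> (\<exists>c\<in>C. c p \<noteq> None)"
  by (cases rule: chain_sup_cases[OF assms, of p]) auto

lemma is_lub_chain_sup:
  assumes ne: "C \<noteq> {}" and pterm: "\<And>c. c \<in> C \<Longrightarrow> is_pterm ar c"
    and ch: "Complete_Partial_Order.chain le_bot C"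
  shows "is_lub ar C (chain_sup C)"
proof -
  have child: "chain_sup C (p @ [i]) \<noteq> None \<longleftrightarrow> (\<exists>f. chain_sup C p = Some (Fun f) \<and> i < ar f)"
    for p i
  proof
    assume "chain_sup C (p @ [i]) \<noteq> None"
    then obtain c where c: "c \<in> C" "c (p @ [i]) \<noteq> None"
      using chain_sup_not_None_iff[OF ch] by blast
    then obtain f where "c p = Some (Fun f)" "i < ar f" using is_pterm_snoc[OF pterm[OF c(1)]] by blast
    then show "\<exists>f. chain_sup C p = Some (Fun f) \<and> i < ar f" using chain_sup_eq[OF ch c(1)] by simp
  next
    assume "\<exists>f. chain_sup C p = Some (Fun f) \<and> i < ar f"
    then obtain f c where c: "c \<in> C" "c p = Some (Fun f)" "i < ar f"
      by (cases rule: chain_sup_cases[OF ch, of p]) auto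
    then show "chain_sup C (p @ [i]) \<noteq> None"
      using chain_sup_not_None_iff[OF ch] is_pterm_snoc[OF pterm[OF c(1)]] by blast
  qed
  obtain c0 where "c0 \<in> C" using ne by blast
  then have "chain_sup C [] \<noteq> None"
    using chain_sup_not_None_iff[OF ch] is_pterm_root[OF pterm] by blast
  then have pt: "is_pterm ar (chain_sup C)" unfolding is_pterm_def using child by blast
  have upper: "le_bot c (chain_sup C)" if "c \<in> C" for c
    by (rule le_botI[OF pterm[OF that] pt])
      (use chain_sup_eq[OF ch that] chain_sup_not_None_iff[OF ch] that in auto)
  have least: "le_bot (chain_sup C) h" if h: "is_pterm ar h" "\<forall>c\<in>C. le_bot c h" for h
  proof (rule le_botI[OF pt h(1)])
    fix p
    assume "chain_sup C p \<noteq> None" "chain_sup C p \<noteq> Some Bot"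
    then show "h p = chain_sup C p"
    proof (cases rule: chain_sup_cases[OF ch, of p, case_names sym bot none])
      case (sym c)
      then show ?thesis using le_bot_eq[of c h p] h(2) by simp
    qed simp_all
  next
    fix p
    assume "chain_sup C p = Some Bot"
    then show "h p \<noteq> None"
    proof (cases rule: chain_sup_cases[OF ch, of p, case_names sym bot none])
      case (bot c)
      then show ?thesis using le_bot_Bot[of c h p] h(2) by simp
    qed simp_all
  qed
  show ?thesis unfolding is_lub_def using pt upper least by blast
qed

lemma chain_lub_attained:
  assumes "C \<noteq> {}" "\<And>c. c \<in> C \<Longrightarrow> is_pterm ar c" "Complete_Partial_Order.chain le_bot C"
    and lub: "is_lub ar C t" and "t p \<noteq> None" "t p \<noteq> Some Bot"
  shows "\<exists>c\<in>C. c p = t p"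
proof -
  have "t = chain_sup C"
    using lub_eqI[OF lub] lub_eqI[OF is_lub_chain_sup[OF assms(1-3)]] by simp
  then show ?thesis
    using assms(5,6) by (cases rule: chain_sup_cases[OF assms(3), of p]) auto
qed

section \<open>Depth-wise approximation and the metric\<close>

definition agree_upto :: "nat \<Rightarrow> ('f, 'v) trm \<Rightarrow> ('f, 'v) trm \<Rightarrow> bool" where
  "agree_upto d s t \<longleftrightarrow> (\<forall>p. length p \<le> d \<longrightarrow> s p = t p)"

definition depth_lim :: "'o::wellorder set \<Rightarrow> ('o \<Rightarrow> ('f, 'v) trm) \<Rightarrow> ('f, 'v) trm \<Rightarrow> bool" where
  "depth_lim I a t \<longleftrightarrow> (\<forall>d. \<exists>b\<in>I. \<forall>i\<in>I. b \<le> i \<longrightarrow> agree_upto d (a i) t)"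

lemma tdist_le_if_agree_upto:
  assumes "agree_upto d s t" shows "tdist s t \<le> inverse (2 ^ Suc d)"
proof (cases "s = t")
  case False
  define k where "k = (LEAST k. \<exists>p. length p = k \<and> s p \<noteq> t p)"
  obtain p where p: "s p \<noteq> t p" using False by blast
  have "\<exists>p. length p = k \<and> s p \<noteq> t p" unfolding k_def by (rule LeastI[of _ "length p"]) (use p in blast)
  then have "Suc d \<le> k" using assms unfolding agree_upto_def by (metis not_less_eq_eq)
  then have "(2::real) ^ Suc d \<le> 2 ^ k" by (rule power_increasing) simp
  then have "inverse ((2::real) ^ k) \<le> inverse (2 ^ Suc d)" by (rule le_imp_inverse_le) simp
  then show ?thesis using False unfolding tdist_def k_def by simp
qed (simp add: tdist_def)

lemma agree_upto_if_tdist_less: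
  assumes "tdist s t < inverse (2 ^ d)" shows "agree_upto d s t"
proof (cases "s = t")
  case False
  define k where "k = (LEAST k. \<exists>p. length p = k \<and> s p \<noteq> t p)"
  have "inverse ((2::real) ^ k) < inverse (2 ^ d)"
    using assms False unfolding tdist_def k_def by simp
  then have "d < k" by (simp add: inverse_less_iff_less power_strict_increasing_iff)
  show ?thesis unfolding agree_upto_def
  proof (intro allI impI)
    fix p :: "nat list"
    assume "length p \<le> d"
    show "s p = t p"
    proof (rule ccontr)
      assume "s p \<noteq> t p"
      then have "k \<le> length p" unfolding k_def by (intro Least_le) blast
      then show False using \<open>d < k\<close> \<open>length p \<le> d\<close> by simp
    qed
  qed
qed (simp add: agree_upto_def)

lemma mlim_iff_depth_lim: "mlim I a t \<longleftrightarrow> depth_lim I a t"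
proof
  assume lim: "mlim I a t"
  show "depth_lim I a t" unfolding depth_lim_def
  proof
    fix d
    have "inverse ((2::real) ^ d) > 0" by simp
    then obtain b where "b \<in> I" "\<forall>i\<in>I. b \<le> i \<longrightarrow> tdist (a i) t < inverse (2 ^ d)"
      using lim unfolding mlim_def by blast
    then show "\<exists>b\<in>I. \<forall>i\<in>I. b \<le> i \<longrightarrow> agree_upto d (a i) t"
      using agree_upto_if_tdist_less by blast
  qed
next
  assume lim: "depth_lim I a t"
  show "mlim I a t" unfolding mlim_def
  proof (intro allI impI)
    fix e :: real
    assume "e > 0"
    then obtain d where "(1 / 2) ^ d < e" using real_arch_pow_inv[of e "1 / 2"] by auto
    then have small: "inverse (2 ^ Suc d) < e"
      using \<open>e > 0\<close> by (simp add: power_one_over inverse_eq_divide)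
    obtain b where b: "b \<in> I" "\<forall>i\<in>I. b \<le> i \<longrightarrow> agree_upto d (a i) t"
      using lim unfolding depth_lim_def by blast
    have "tdist (a i) t < e" if "i \<in> I" "b \<le> i" for i
      using tdist_le_if_agree_upto[of d "a i" t] b(2) that small by simp
    then show "\<exists>b\<in>I. \<forall>i\<in>I. b \<le> i \<longrightarrow> tdist (a i) t < e" using b(1) by blast
  qed
qed

lemma agree_upto_if_agree_on_poss:
  assumes s: "is_pterm ar s" and t: "is_pterm ar t"
    and eq: "\<And>p. length p \<le> d \<Longrightarrow> t p \<noteq> None \<Longrightarrow> s p = t p"
  shows "agree_upto d s t"
proof -
  have "length p \<le> d \<longrightarrow> s p = t p" for p
  proof (induction p rule: rev_induct)
    case Nil
    then show ?case using eq is_pterm_root[OF t] by auto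
  next
    case (snoc i p)
    show ?case
    proof
      assume d: "length (p @ [i]) \<le> d"
      show "s (p @ [i]) = t (p @ [i])"
      proof (cases "t (p @ [i]) = None")
        case True
        have "s p = t p" using snoc.IH d by simp
        then show ?thesis using True is_pterm_snoc[OF s, of p i] is_pterm_snoc[OF t, of p i] by auto
      qed (use eq d in blast)
    qed
  qed
  then show ?thesis unfolding agree_upto_def by blast
qed

lemma finite_poss_upto:
  assumes t: "is_pterm ar t" shows "finite {p. length p \<le> d \<and> t p \<noteq> None}"
proof (induction d)
  case 0
  have "{p. length p \<le> 0 \<and> t p \<noteq> None} \<subseteq> {[]}" by auto
  then show ?case by (rule finite_subset) simp
next
  case (Suc d)
  define S where "S = {p. length p \<le> d \<and> t p \<noteq> None}"
  define k where "k p = (case t p of Some (Fun f) \<Rightarrow> ar f | _ \<Rightarrow> 0)" for p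
  have "{p. length p \<le> Suc d \<and> t p \<noteq> None} \<subseteq> S \<union> (\<Union>p\<in>S. (\<lambda>i. p @ [i]) ` {..<k p})"
  proof
    fix q
    assume q: "q \<in> {p. length p \<le> Suc d \<and> t p \<noteq> None}"
    show "q \<in> S \<union> (\<Union>p\<in>S. (\<lambda>i. p @ [i]) ` {..<k p})"
    proof (cases "length q \<le> d")
      case False
      then obtain p i where pi: "q = p @ [i]" by (cases q rule: rev_cases) auto
      then obtain f where f: "t p = Some (Fun f)" "i < ar f" using is_pterm_snoc[OF t] q by blast
      then have "p \<in> S" using q pi unfolding S_def by simp
      moreover have "i < k p" using f unfolding k_def by simp
      ultimately show ?thesis using pi by blast
    qed (use q in \<open>simp add: S_def\<close>)
  qed
  moreover have "finite (S \<union> (\<Union>p\<in>S. (\<lambda>i. p @ [i]) ` {..<k p}))"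
    using Suc.IH unfolding S_def by simp
  ultimately show ?case by (rule finite_subset)
qed

definition trunc :: "nat \<Rightarrow> ('f, 'v) trm \<Rightarrow> ('f, 'v) trm" where
  "trunc d t = (\<lambda>p. if length p \<le> d then t p
      else if length p = Suc d \<and> t p \<noteq> None then Some Bot else None)"

lemma is_pterm_trunc:
  assumes t: "is_pterm ar t" shows "is_pterm ar (trunc d t)"
  unfolding is_pterm_def
proof (intro conjI allI)
  show "trunc d t [] \<noteq> None" using is_pterm_root[OF t] unfolding trunc_def by simp
next
  fix p i
  show "trunc d t (p @ [i]) \<noteq> None \<longleftrightarrow> (\<exists>f. trunc d t p = Some (Fun f) \<and> i < ar f)"
    using is_pterm_snoc[OF t, of p i] unfolding trunc_def by (cases "length p \<le> d") auto
qed

lemma trunc_le_bot: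
  assumes t: "is_total ar t" and s: "is_pterm ar s" and agree: "agree_upto d s t"
  shows "le_bot (trunc d t) s"
proof (rule le_botI[OF is_pterm_trunc[OF is_total_pterm[OF t]] s])
  fix p
  assume "trunc d t p \<noteq> None" "trunc d t p \<noteq> Some Bot"
  then show "s p = trunc d t p" using agree unfolding trunc_def agree_upto_def by (auto split: if_splits)
next
  fix p
  assume "trunc d t p = Some Bot"
  then have p: "length p = Suc d" "t p \<noteq> None"
    using is_total_not_Bot[OF t] unfolding trunc_def by (auto split: if_splits)
  then obtain p' i where "p = p' @ [i]" by (cases p rule: rev_cases) auto
  moreover have "s p' = t p'" using agree p(1) \<open>p = p' @ [i]\<close> unfolding agree_upto_def by simp
  ultimately show "s p \<noteq> None"
    using p(2) is_pterm_snoc[OF s, of p' i] is_pterm_snoc[OF is_total_pterm[OF t], of p' i] by simp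
qed

section \<open>Limit inferior versus metric limit\<close>

definition tail_glb :: "('f \<Rightarrow> nat) \<Rightarrow> 'o::wellorder set \<Rightarrow> ('o \<Rightarrow> ('f, 'v) trm) \<Rightarrow> 'o \<Rightarrow> ('f, 'v) trm"
  where "tail_glb ar I a b = glb ar (a ` {i \<in> I. b \<le> i})"

lemma pliminf_eq_lub_tail_glb: "pliminf ar I a = lub ar (tail_glb ar I a ` I)"
  unfolding pliminf_def tail_glb_def by (simp add: Setcompr_eq_image)

context
  fixes ar :: "'f \<Rightarrow> nat" and I :: "'o::wellorder set" and a :: "'o \<Rightarrow> ('f, 'v) trm"
  assumes pterm: "\<And>i. i \<in> I \<Longrightarrow> is_pterm ar (a i)"
begin

lemma is_glb_tail_glb:
  assumes "b \<in> I" shows "is_glb ar (a ` {i \<in> I. b \<le> i}) (tail_glb ar I a b)"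
proof -
  have "is_glb ar (a ` {i \<in> I. b \<le> i}) (common_part (a ` {i \<in> I. b \<le> i}))"
    by (rule is_glb_common_part) (use assms pterm in auto)
  moreover from this have "tail_glb ar I a b = common_part (a ` {i \<in> I. b \<le> i})"
    unfolding tail_glb_def by (rule glb_eqI)
  ultimately show ?thesis by simp
qed

lemma is_pterm_tail_glb: "b \<in> I \<Longrightarrow> is_pterm ar (tail_glb ar I a b)"
  using is_glb_tail_glb is_glb_def by blast

lemma tail_glb_le_bot: "b \<in> I \<Longrightarrow> i \<in> I \<Longrightarrow> b \<le> i \<Longrightarrow> le_bot (tail_glb ar I a b) (a i)"
  using is_glb_tail_glb unfolding is_glb_def by blast

lemma le_bot_tail_glb:
  "b \<in> I \<Longrightarrow> is_pterm ar h \<Longrightarrow> (\<And>i. i \<in> I \<Longrightarrow> b \<le> i \<Longrightarrow> le_bot h (a i)) \<Longrightarrow>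
    le_bot h (tail_glb ar I a b)"
  using is_glb_tail_glb unfolding is_glb_def by blast

lemma tail_glb_mono:
  "b \<in> I \<Longrightarrow> b' \<in> I \<Longrightarrow> b \<le> b' \<Longrightarrow> le_bot (tail_glb ar I a b) (tail_glb ar I a b')"
  by (rule le_bot_tail_glb) (auto intro: is_pterm_tail_glb tail_glb_le_bot)

lemma chain_tail_glb: "Complete_Partial_Order.chain le_bot (tail_glb ar I a ` I)"
  unfolding chain_def
proof (intro ballI)
  fix x y
  assume "x \<in> tail_glb ar I a ` I" "y \<in> tail_glb ar I a ` I"
  then obtain b b' where "b \<in> I" "b' \<in> I" "x = tail_glb ar I a b" "y = tail_glb ar I a b'"
    by blast
  then show "le_bot x y \<or> le_bot y x"
    using tail_glb_mono by (cases "b \<le> b'") (simp_all add: not_le less_imp_le)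
qed

lemma is_lub_pliminf:
  assumes "I \<noteq> {}" shows "is_lub ar (tail_glb ar I a ` I) (pliminf ar I a)"
proof -
  have "is_lub ar (tail_glb ar I a ` I) (chain_sup (tail_glb ar I a ` I))"
    using assms is_pterm_tail_glb chain_tail_glb by (intro is_lub_chain_sup) auto
  moreover from this have "pliminf ar I a = chain_sup (tail_glb ar I a ` I)"
    unfolding pliminf_eq_lub_tail_glb by (rule lub_eqI)
  ultimately show ?thesis by simp
qed

text \<open>Each of the finitely many positions of \<open>t\<close> up to depth \<open>d\<close> is reached by some tail
  bound; beyond the largest of these tails all terms agree with \<open>t\<close> up to depth \<open>d\<close>.\<close>
lemma depth_lim_if_pliminf:
  assumes ne: "I \<noteq> {}" and t: "is_total ar t" and lim: "pliminf ar I a = t"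
  shows "depth_lim I a t"
  unfolding depth_lim_def
proof
  fix d
  define P where "P = {p. length p \<le> d \<and> t p \<noteq> None}"
  have "finite P" unfolding P_def using finite_poss_upto[OF is_total_pterm[OF t]] .
  have "[] \<in> P" unfolding P_def using is_pterm_root[OF is_total_pterm[OF t]] by simp
  have defined: "t p \<noteq> None" "t p \<noteq> Some Bot" if "p \<in> P" for p
    using that is_total_not_Bot[OF t] unfolding P_def by auto
  have "\<exists>b\<in>I. tail_glb ar I a b p = t p" if "p \<in> P" for p
  proof -
    have "tail_glb ar I a ` I \<noteq> {}" "\<And>c. c \<in> tail_glb ar I a ` I \<Longrightarrow> is_pterm ar c"
      using ne is_pterm_tail_glb by auto
    from chain_lub_attained[OF this chain_tail_glb is_lub_pliminf[OF ne, unfolded lim]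
        defined[OF that]]
    show ?thesis by blast
  qed
  then obtain B where B: "\<And>p. p \<in> P \<Longrightarrow> B p \<in> I" "\<And>p. p \<in> P \<Longrightarrow> tail_glb ar I a (B p) p = t p"
    by metis
  define b where "b = Max (B ` P)"
  have "b \<in> B ` P" unfolding b_def using \<open>finite P\<close> \<open>[] \<in> P\<close> by (intro Max_in) auto
  then have "b \<in> I" using B(1) by blast
  have "a i p = t p" if i: "i \<in> I" "b \<le> i" and p: "p \<in> P" for i p
  proof -
    have "B p \<le> b" using \<open>finite P\<close> p unfolding b_def by simp
    then have "le_bot (tail_glb ar I a (B p)) (tail_glb ar I a b)"
      using tail_glb_mono B(1)[OF p] \<open>b \<in> I\<close> by blast
    then have "tail_glb ar I a b p = t p" using le_bot_eq B(2)[OF p] defined[OF p] by metis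
    moreover have "le_bot (tail_glb ar I a b) (a i)" using tail_glb_le_bot \<open>b \<in> I\<close> i by blast
    ultimately show ?thesis using le_bot_eq defined[OF p] by metis
  qed
  then have "\<forall>i\<in>I. b \<le> i \<longrightarrow> agree_upto d (a i) t"
    using agree_upto_if_agree_on_poss[OF pterm is_total_pterm[OF t]] unfolding P_def by blast
  then show "\<exists>b\<in>I. \<forall>i\<in>I. b \<le> i \<longrightarrow> agree_upto d (a i) t" using \<open>b \<in> I\<close> by blast
qed

context
  fixes t :: "('f, 'v) trm"
  assumes t: "is_total ar t" and lim: "depth_lim I a t"
begin

private lemma eventually_agree_upto:
  assumes "b \<in> I" obtains b' where "b' \<in> I" "b \<le> b'" "agree_upto d (a b') t"
proof -
  obtain b0 where "b0 \<in> I" "\<forall>i\<in>I. b0 \<le> i \<longrightarrow> agree_upto d (a i) t"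
    using lim unfolding depth_lim_def by blast
  then show ?thesis using that[of "max b b0"] assms by (simp add: max_def)
qed

lemma tail_glb_le_bot_depth_lim:
  assumes b: "b \<in> I" shows "le_bot (tail_glb ar I a b) t"
proof (rule le_botI[OF is_pterm_tail_glb[OF b] is_total_pterm[OF t]])
  fix p :: "nat list"
  obtain b' where b': "b' \<in> I" "b \<le> b'" "agree_upto (length p) (a b') t"
    using eventually_agree_upto[OF b] by blast
  then have "t p = a b' p" unfolding agree_upto_def by simp
  moreover have "le_bot (tail_glb ar I a b) (a b')" using tail_glb_le_bot b b' by blast
  ultimately show "t p = tail_glb ar I a b p"
    if "tail_glb ar I a b p \<noteq> None" "tail_glb ar I a b p \<noteq> Some Bot"
    using le_bot_eq that by metis
  show "t p \<noteq> None" if "tail_glb ar I a b p = Some Bot"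
    using le_bot_Bot that \<open>t p = a b' p\<close> \<open>le_bot (tail_glb ar I a b) (a b')\<close> by metis
qed

text \<open>Truncations of \<open>t\<close> lie below all sufficiently late tail bounds, and they exhaust \<open>t\<close>.\<close>
lemma depth_lim_le_bot_upper_bound:
  assumes h: "is_pterm ar h" and above: "\<And>b. b \<in> I \<Longrightarrow> le_bot (tail_glb ar I a b) h"
  shows "le_bot t h"
proof (rule le_botI[OF is_total_pterm[OF t] h])
  fix p
  assume "t p \<noteq> None"
  obtain b where b: "b \<in> I" "\<forall>i\<in>I. b \<le> i \<longrightarrow> agree_upto (length p) (a i) t"
    using lim unfolding depth_lim_def by blast
  have "le_bot (trunc (length p) t) (tail_glb ar I a b)"
    by (rule le_bot_tail_glb[OF b(1) is_pterm_trunc[OF is_total_pterm[OF t]]])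
      (use trunc_le_bot[OF t pterm] b(2) in blast)
  moreover have "trunc (length p) t p = t p" unfolding trunc_def by simp
  ultimately have "tail_glb ar I a b p = t p"
    using le_bot_eq \<open>t p \<noteq> None\<close> is_total_not_Bot[OF t] by metis
  then show "h p = t p"
    using le_bot_eq[OF above[OF b(1)]] \<open>t p \<noteq> None\<close> is_total_not_Bot[OF t] by metis
qed (use is_total_not_Bot[OF t] in blast)

lemma pliminf_if_depth_lim: "pliminf ar I a = t"
proof -
  have "is_lub ar (tail_glb ar I a ` I) t"
    unfolding is_lub_def
    using is_total_pterm[OF t] tail_glb_le_bot_depth_lim depth_lim_le_bot_upper_bound by blast
  then show ?thesis unfolding pliminf_eq_lub_tail_glb by (rule lub_eqI)
qed

end

theorem pliminf_eq_iff_mlim: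
  "I \<noteq> {} \<Longrightarrow> is_total ar t \<Longrightarrow> pliminf ar I a = t \<longleftrightarrow> mlim I a t"
  using depth_lim_if_pliminf pliminf_if_depth_lim mlim_iff_depth_lim by blast

end

section \<open>Rewrite steps between total terms\<close>

lemma subst_apply_cong:
  assumes "\<And>x. x \<in> vars l \<Longrightarrow> \<sigma> x = \<tau> x"
  shows "subst_apply \<sigma> l = subst_apply \<tau> l"
proof
  fix p
  show "subst_apply \<sigma> l p = subst_apply \<tau> l p"
  proof (cases "\<exists>q x. prefix q p \<and> l q = Some (Var x)")
    case True
    define qx where "qx = (SOME qx. prefix (fst qx) p \<and> l (fst qx) = Some (Var (snd qx)))"
    have "prefix (fst qx) p \<and> l (fst qx) = Some (Var (snd qx))"
      unfolding qx_def by (rule someI_ex) (use True in auto)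
    then have "snd qx \<in> vars l" unfolding vars_def by blast
    moreover have "subst_apply \<rho> l p = (case qx of (q, x) \<Rightarrow> \<rho> x (drop (length q) p))" for \<rho>
      unfolding subst_apply_def qx_def by (simp only: if_P[OF True])
    ultimately show ?thesis using assms by (cases qx) simp
  next
    case False
    then show ?thesis unfolding subst_apply_def by (simp only: if_not_P[OF False] if_False)
  qed
qed

lemma subst_apply_at_Var:
  assumes l: "is_pterm ar l" and x: "l q = Some (Var x)"
  shows "subst_apply \<sigma> l (q @ p) = \<sigma> x p"
proof -
  let ?P = "\<lambda>qx. prefix (fst qx) (q @ p) \<and> l (fst qx) = Some (Var (snd qx))"
  have unique: "qx = (q, x)" if qx: "?P qx" for qx
  proof -
    have "prefix (fst qx) q \<or> prefix q (fst qx)"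
      using qx prefix_same_cases[of "fst qx" "q @ p" q] by simp
    moreover have "\<not> strict_prefix (fst qx) q"
      using is_pterm_strict_prefix[OF l, of q "fst qx"] x qx by auto
    moreover have "\<not> strict_prefix q (fst qx)"
      using is_pterm_strict_prefix[OF l, of "fst qx" q] x qx by auto
    ultimately have "fst qx = q" by (auto simp: prefix_order.le_less)
    then show ?thesis using qx x by (cases qx) simp
  qed
  then have "(SOME qx. ?P qx) = (q, x)" using x by (intro some_equality) auto
  moreover have "\<exists>q' x'. prefix q' (q @ p) \<and> l q' = Some (Var x')"
    using x prefixI[of "q @ p" q p] by blast
  ultimately show ?thesis unfolding subst_apply_def by simp
qed

lemma subst_apply_not_Bot_imp_var_not_Bot:
  assumes "is_pterm ar l" "x \<in> vars l" "\<And>p. subst_apply \<sigma> l p \<noteq> Some Bot"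
  shows "\<sigma> x p \<noteq> Some Bot"
proof -
  obtain q where q: "l q = Some (Var x)" using assms(2) unfolding vars_def by blast
  show ?thesis using assms(3)[of "q @ p"] subst_apply_at_Var[OF assms(1) q] by simp
qed

definition var_term :: "'v \<Rightarrow> ('f, 'v) trm" where
  "var_term x = (\<lambda>p. if p = [] then Some (Var x) else None)"

lemma is_total_var_term: "is_total ar (var_term x)"
  unfolding is_total_def is_pterm_def var_term_def by simp

text \<open>The substitution of a partial step between total terms is total on \<open>vars l\<close>, since
  its values there are subterms of the source; as \<open>vars r \<subseteq> vars l\<close>, it may be reset
  to variables elsewhere.\<close>
lemma rstep_total_if_rstep_pterm:
  assumes R: "is_TRS ar R" and step: "rstep (is_pterm ar) R t \<pi> u"
    and t: "is_total ar t" and u: "is_total ar u"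
  shows "rstep (is_total ar) R t \<pi> u"
proof -
  obtain l r \<sigma> where lr: "(l, r) \<in> R" and \<sigma>: "\<forall>x. is_pterm ar (\<sigma> x)"
    and lhs: "subterm_at t \<pi> = subst_apply \<sigma> l" and rhs: "u = replace_at t \<pi> (subst_apply \<sigma> r)"
    and \<pi>: "\<pi> \<in> poss t"
    using step unfolding rstep_def by blast
  have l: "is_pterm ar l" and vars_r: "vars r \<subseteq> vars l"
    using R lr unfolding is_TRS_def is_total_def by auto
  define \<tau> where "\<tau> x = (if x \<in> vars l then \<sigma> x else var_term x)" for x
  have not_Bot: "subst_apply \<sigma> l p \<noteq> Some Bot" for p
    using fun_cong[OF lhs, of p] is_total_not_Bot[OF t, of "\<pi> @ p"] unfolding subterm_at_def by simp
  have "is_total ar (\<tau> x)" for x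
  proof (cases "x \<in> vars l")
    case True
    then show ?thesis
      using \<sigma> subst_apply_not_Bot_imp_var_not_Bot[OF l True not_Bot] unfolding \<tau>_def is_total_def
      by simp
  next
    case False
    then show ?thesis using is_total_var_term unfolding \<tau>_def by simp
  qed
  moreover have "subst_apply \<tau> l = subst_apply \<sigma> l" by (rule subst_apply_cong) (simp add: \<tau>_def)
  moreover have "subst_apply \<tau> r = subst_apply \<sigma> r"
    by (rule subst_apply_cong) (use vars_r in \<open>auto simp: \<tau>_def\<close>)
  ultimately have "\<exists>\<sigma>. (\<forall>x. is_total ar (\<sigma> x)) \<and>
      subterm_at t \<pi> = subst_apply \<sigma> l \<and> u = replace_at t \<pi> (subst_apply \<sigma> r)"
    using lhs rhs by (intro exI[of _ \<tau>]) simp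
  then show ?thesis unfolding rstep_def using t u \<pi> lr by auto
qed

lemma rstep_pterm_if_rstep_total:
  assumes "rstep (is_total ar) R t \<pi> u" shows "rstep (is_pterm ar) R t \<pi> u"
proof -
  obtain l r \<sigma> where "(l, r) \<in> R" "\<forall>x. is_total ar (\<sigma> x)"
    "subterm_at t \<pi> = subst_apply \<sigma> l" "u = replace_at t \<pi> (subst_apply \<sigma> r)"
    using assms unfolding rstep_def by blast
  then show ?thesis using assms is_total_pterm unfolding rstep_def by blast
qed

lemma less_in_idx: "i < \<alpha> \<Longrightarrow> i \<in> idx \<alpha>"
  unfolding idx_def by auto

lemma osuc_in_idx:
  assumes "i < \<alpha>" shows "osuc i \<in> idx \<alpha>"
proof (cases "is_limit \<alpha>")
  case True
  then obtain k where "i < k" "k < \<alpha>" using assms unfolding is_limit_def by blast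
  moreover from \<open>i < k\<close> have "osuc i \<le> k" unfolding osuc_def by (rule Least_le)
  ultimately have "osuc i < \<alpha>" by simp
  then show ?thesis using True unfolding idx_def by simp
next
  case False
  have "osuc i \<le> \<alpha>" unfolding osuc_def using assms by (rule Least_le)
  then show ?thesis using False unfolding idx_def by simp
qed

lemma idx_nonempty: "idx \<alpha> \<noteq> {}"
  unfolding idx_def is_limit_def by auto

lemma is_reduction_total_iff:
  assumes R: "is_TRS ar R"
  shows "is_reduction (is_total ar) R \<alpha> ts ps \<longleftrightarrow>
    is_reduction (is_pterm ar) R \<alpha> ts ps \<and> total_red ar \<alpha> ts"
proof
  assume red: "is_reduction (is_total ar) R \<alpha> ts ps"
  then have "is_reduction (is_pterm ar) R \<alpha> ts ps"
    using rstep_pterm_if_rstep_total is_total_pterm unfolding is_reduction_def by blast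
  moreover have "total_red ar \<alpha> ts" using red unfolding is_reduction_def total_red_def by blast
  ultimately show "is_reduction (is_pterm ar) R \<alpha> ts ps \<and> total_red ar \<alpha> ts" ..
next
  assume "is_reduction (is_pterm ar) R \<alpha> ts ps \<and> total_red ar \<alpha> ts"
  then have red: "is_reduction (is_pterm ar) R \<alpha> ts ps" and total: "\<And>i. i \<in> idx \<alpha> \<Longrightarrow> is_total ar (ts i)"
    unfolding total_red_def by blast+
  have "rstep (is_total ar) R (ts i) (ps i) (ts (osuc i))" if "i < \<alpha>" for i
  proof (rule rstep_total_if_rstep_pterm[OF R])
    show "rstep (is_pterm ar) R (ts i) (ps i) (ts (osuc i))"
      using red that unfolding is_reduction_def by blast
    show "is_total ar (ts i)" "is_total ar (ts (osuc i))"
      using total less_in_idx[OF that] osuc_in_idx[OF that] by blast+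
  qed
  then show "is_reduction (is_total ar) R \<alpha> ts ps"
    unfolding is_reduction_def using total by blast
qed

lemma weakly_m_continuous_iff:
  assumes R: "is_TRS ar R"
  shows "weakly_m_continuous ar R \<alpha> ts ps \<longleftrightarrow>
    weakly_p_continuous ar R \<alpha> ts ps \<and> total_red ar \<alpha> ts"
proof -
  have limit: "pliminf ar {i. i < lam} ts = ts lam \<longleftrightarrow> mlim {i. i < lam} ts (ts lam)"
    if total: "total_red ar \<alpha> ts" and lam: "lam < \<alpha>" "is_limit lam" for lam
  proof (rule pliminf_eq_iff_mlim)
    fix i
    assume "i \<in> {i. i < lam}"
    then have "i < \<alpha>" using lam(1) by simp
    then show "is_pterm ar (ts i)" using total less_in_idx is_total_pterm unfolding total_red_def by blast
  next
    show "{i. i < lam} \<noteq> {}" using lam(2) unfolding is_limit_def by auto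
    show "is_total ar (ts lam)" using total lam(1) less_in_idx unfolding total_red_def by blast
  qed
  show ?thesis
  proof
    assume "weakly_m_continuous ar R \<alpha> ts ps"
    then have red: "is_reduction (is_pterm ar) R \<alpha> ts ps" "total_red ar \<alpha> ts"
      and lim: "\<forall>lam<\<alpha>. is_limit lam \<longrightarrow> mlim {i. i < lam} ts (ts lam)"
      unfolding weakly_m_continuous_def is_reduction_total_iff[OF R] by blast+
    then show "weakly_p_continuous ar R \<alpha> ts ps \<and> total_red ar \<alpha> ts"
      unfolding weakly_p_continuous_def by (simp add: limit[OF red(2)])
  next
    assume "weakly_p_continuous ar R \<alpha> ts ps \<and> total_red ar \<alpha> ts"
    then have red: "is_reduction (is_pterm ar) R \<alpha> ts ps" "total_red ar \<alpha> ts"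
      and lim: "\<forall>lam<\<alpha>. is_limit lam \<longrightarrow> pliminf ar {i. i < lam} ts = ts lam"
      unfolding weakly_p_continuous_def by blast+
    then show "weakly_m_continuous ar R \<alpha> ts ps"
      unfolding weakly_m_continuous_def is_reduction_total_iff[OF R] by (simp add: limit[OF red(2)])
  qed
qed

theorem theorem4p9:
  fixes ar :: "'f \<Rightarrow> nat"
    and R :: "(('f, 'v) trm \<times> ('f, 'v) trm) set"
    and \<alpha> :: "'o::wellorder"
    and ts :: "'o \<Rightarrow> ('f, 'v) trm"
    and ps :: "'o \<Rightarrow> nat list"
    and s t :: "('f, 'v) trm"
  assumes "is_TRS ar R"
  shows "((weakly_p_continuous ar R \<alpha> ts ps \<and> total_red ar \<alpha> ts \<and> ts ozero = s)
            \<longleftrightarrow> (weakly_m_continuous ar R \<alpha> ts ps \<and> ts ozero = s))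
       \<and> ((weakly_p_converges ar R \<alpha> ts ps t \<and> total_red ar \<alpha> ts \<and> is_total ar t \<and> ts ozero = s)
            \<longleftrightarrow> (weakly_m_converges ar R \<alpha> ts ps t \<and> ts ozero = s))"
proof -
  have final_limit: "pliminf ar (idx \<alpha>) ts = t \<longleftrightarrow> mlim (idx \<alpha>) ts t"
    if "total_red ar \<alpha> ts" "is_total ar t"
    by (rule pliminf_eq_iff_mlim[OF _ idx_nonempty that(2)])
      (use that(1) is_total_pterm in \<open>auto simp: total_red_def\<close>)
  show ?thesis
    using weakly_m_continuous_iff[OF assms] final_limit
    unfolding weakly_p_converges_def weakly_m_converges_def by (auto simp: eq_commute)
qed

end
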